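(* Let $\beta>0$ and $\alpha>0$, and define $f:[0,1]\to\mathbb{R}$ by $f(k)=\alpha k(1-k)^{\beta}$. If $$\left(\frac{\beta+1}{\beta}\right)^{\beta}<\alpha\leq(\beta+1)\left(\frac{\beta+1}{\beta}\right)^{\beta},$$ then $f$ maps $[0,1]$ into itself and $f\in\mathfrak{G}$ (with $[a,b]=[0,1]$).
   Context: $\mathfrak{G}$ denotes the set of continuous maps $g$ from a closed interval $[a,b]$ into itself satisfying: (1) there exists $m\in(a,b)$ such that $g$ is strictly increasing on $[a,m]$ and strictly decreasing on $[m,b]$; (2) $g(a)\geq a$, $g(b)<b$, and $g(x)>x$ for all $x\in(a,m]$. *)

theory Defs
  imports "HOL-Analysis.Analysis"
begin

definition in_class_G :: "(real \<Rightarrow> real) \<Rightarrow> real \<Rightarrow> real \<Rightarrow> bool" where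
  "in_class_G g a b \<longleftrightarrow>
     a < b \<and> continuous_on {a..b} g \<and> g ` {a..b} \<subseteq> {a..b} \<and>
     (\<exists>m. a < m \<and> m < b \<and>
        strict_mono_on {a..m} g \<and> strict_antimono_on {m..b} g \<and>
        g a \<ge> a \<and> g b < b \<and> (\<forall>x\<in>{a<..m}. g x > x))"

end

theory Submission
  imports Defs
begin

text \<open>The derivative of \<open>f(k) = \<alpha> k (1 - k)^\<beta>\<close> on \<open>(0,1)\<close> is
\<open>\<alpha> (1 - k)^(\<beta> - 1) (1 - (\<beta> + 1) k)\<close>, so \<open>f\<close> is unimodal with turning point
\<open>m = 1/(\<beta> + 1)\<close> and peak value \<open>f(m) = \<alpha>/(\<beta> + 1) \<cdot> (\<beta>/(\<beta> + 1))^\<beta>\<close>; the upper bound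
on \<open>\<alpha>\<close> says exactly that \<open>f(m) \<le> 1\<close>. On \<open>(0,m]\<close> we have
\<open>f(x)/x = \<alpha> (1 - x)^\<beta> \<ge> \<alpha> (\<beta>/(\<beta> + 1))^\<beta>\<close>, which exceeds 1 by the lower bound on \<open>\<alpha>\<close>.\<close>

lemma strict_mono_on_if_DERIV_pos:
  fixes g g' :: "real \<Rightarrow> real"
  assumes "continuous_on {a..b} g"
    and "\<And>x. a < x \<Longrightarrow> x < b \<Longrightarrow> (g has_real_derivative g' x) (at x)"
    and "\<And>x. a < x \<Longrightarrow> x < b \<Longrightarrow> g' x > 0"
  shows "strict_mono_on {a..b} g"
proof (rule strict_mono_onI)
  fix x y assume xy: "x \<in> {a..b}" "y \<in> {a..b}" "x < y"
  show "g x < g y"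
  proof (rule DERIV_pos_imp_increasing_open[OF \<open>x < y\<close>])
    fix t assume "x < t" "t < y"
    with xy have "a < t" "t < b"
      by auto
    with assms(2,3) show "\<exists>z. (g has_real_derivative z) (at t) \<and> z > 0"
      by blast
  next
    show "continuous_on {x..y} g"
      using xy by (intro continuous_on_subset[OF assms(1)]) auto
  qed
qed

lemma strict_antimono_on_if_DERIV_neg:
  fixes g g' :: "real \<Rightarrow> real"
  assumes "continuous_on {a..b} g"
    and "\<And>x. a < x \<Longrightarrow> x < b \<Longrightarrow> (g has_real_derivative g' x) (at x)"
    and "\<And>x. a < x \<Longrightarrow> x < b \<Longrightarrow> g' x < 0"
  shows "strict_antimono_on {a..b} g"
proof (rule monotone_onI)
  fix x y assume xy: "x \<in> {a..b}" "y \<in> {a..b}" "x < y"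
  show "g y < g x"
  proof (rule DERIV_neg_imp_decreasing_open[OF \<open>x < y\<close>])
    fix t assume "x < t" "t < y"
    with xy have "a < t" "t < b"
      by auto
    with assms(2,3) show "\<exists>z. (g has_real_derivative z) (at t) \<and> z < 0"
      by blast
  next
    show "continuous_on {x..y} g"
      using xy by (intro continuous_on_subset[OF assms(1)]) auto
  qed
qed

lemma unimodal_le_peak:
  fixes g :: "real \<Rightarrow> real"
  assumes "strict_mono_on {a..m} g" and "strict_antimono_on {m..b} g" and "x \<in> {a..b}"
  shows "g x \<le> g m"
proof (cases "x \<le> m")
  case True
  then show ?thesis
    using assms(3) by (intro strict_mono_on_leD[OF assms(1)]) auto
next
  case False
  then have "g x < g m"
    using assms(3) by (intro monotone_onD[OF assms(2)]) auto
  then show ?thesis by simp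
qed

definition logistic_powr :: "real \<Rightarrow> real \<Rightarrow> real \<Rightarrow> real" where
  "logistic_powr \<alpha> \<beta> k = \<alpha> * k * (1 - k) powr \<beta>"

lemma continuous_on_logistic_powr:
  assumes "\<beta> > 0"
  shows "continuous_on {0..1} (logistic_powr \<alpha> \<beta>)"
  unfolding logistic_powr_def
  by (intro continuous_intros continuous_on_powr') (use assms in auto)

lemma has_real_derivative_logistic_powr:
  assumes "0 < x" and "x < 1"
  shows "(logistic_powr \<alpha> \<beta> has_real_derivative
           \<alpha> * (1 - x) powr (\<beta> - 1) * (1 - (\<beta> + 1) * x)) (at x)"
proof -
  have "((\<lambda>k. 1 - k) has_real_derivative -1) (at x)"
    by (auto intro!: derivative_eq_intros)
  then have "((\<lambda>k. (1 - k) powr \<beta>) has_real_derivative \<beta> * (1 - x) powr (\<beta> - 1) * -1) (at x)"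
    using DERIV_fun_powr[of "\<lambda>k. 1 - k" "-1" x \<beta>] assms by simp
  then have "(logistic_powr \<alpha> \<beta> has_real_derivative
               \<alpha> * (1 - x) powr \<beta> - \<alpha> * x * \<beta> * (1 - x) powr (\<beta> - 1)) (at x)"
    using assms unfolding logistic_powr_def[abs_def]
    by (auto intro!: derivative_eq_intros simp: algebra_simps)
  moreover have "(1 - x) powr \<beta> = (1 - x) * (1 - x) powr (\<beta> - 1)"
    using assms by (simp add: powr_mult_base)
  ultimately show ?thesis
    by (simp add: algebra_simps)
qed

lemma strict_mono_on_logistic_powr:
  assumes "\<alpha> > 0" and "\<beta> > 0"
  shows "strict_mono_on {0..1 / (\<beta> + 1)} (logistic_powr \<alpha> \<beta>)"
proof (rule strict_mono_on_if_DERIV_pos)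
  show "continuous_on {0..1 / (\<beta> + 1)} (logistic_powr \<alpha> \<beta>)"
    using assms by (intro continuous_on_subset[OF continuous_on_logistic_powr]) auto
next
  fix x assume x: "0 < x" "x < 1 / (\<beta> + 1)"
  have "1 / (\<beta> + 1) < 1"
    using assms by simp
  with x have "x < 1"
    by linarith
  moreover have "(\<beta> + 1) * x < 1"
    using x assms by (simp add: field_simps)
  ultimately show "(logistic_powr \<alpha> \<beta> has_real_derivative
                      \<alpha> * (1 - x) powr (\<beta> - 1) * (1 - (\<beta> + 1) * x)) (at x)"
    and "\<alpha> * (1 - x) powr (\<beta> - 1) * (1 - (\<beta> + 1) * x) > 0"
    using x assms by (auto intro: has_real_derivative_logistic_powr)
qed

lemma strict_antimono_on_logistic_powr:
  assumes "\<alpha> > 0" and "\<beta> > 0"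
  shows "strict_antimono_on {1 / (\<beta> + 1)..1} (logistic_powr \<alpha> \<beta>)"
proof (rule strict_antimono_on_if_DERIV_neg)
  show "continuous_on {1 / (\<beta> + 1)..1} (logistic_powr \<alpha> \<beta>)"
    using assms by (intro continuous_on_subset[OF continuous_on_logistic_powr]) auto
next
  fix x assume x: "1 / (\<beta> + 1) < x" "x < 1"
  have "0 < 1 / (\<beta> + 1)"
    using assms by simp
  with x have "0 < x"
    by linarith
  moreover have "(\<beta> + 1) * x > 1"
    using x assms by (simp add: field_simps)
  ultimately show "(logistic_powr \<alpha> \<beta> has_real_derivative
                      \<alpha> * (1 - x) powr (\<beta> - 1) * (1 - (\<beta> + 1) * x)) (at x)"
    and "\<alpha> * (1 - x) powr (\<beta> - 1) * (1 - (\<beta> + 1) * x) < 0"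
    using x assms by (auto intro: has_real_derivative_logistic_powr simp: mult_pos_neg)
qed

lemma one_minus_inverse_succ_powr:
  fixes \<beta> :: real
  assumes "\<beta> > 0"
  shows "(1 - 1 / (\<beta> + 1)) powr \<beta> = 1 / ((\<beta> + 1) / \<beta>) powr \<beta>"
proof -
  have "1 - 1 / (\<beta> + 1) = \<beta> / (\<beta> + 1)"
    using assms by (simp add: field_simps)
  then show ?thesis
    using assms by (simp add: powr_divide)
qed

lemma logistic_powr_peak:
  assumes "\<beta> > 0"
  shows "logistic_powr \<alpha> \<beta> (1 / (\<beta> + 1)) = \<alpha> / (\<beta> + 1) / ((\<beta> + 1) / \<beta>) powr \<beta>"
  using assms by (simp add: logistic_powr_def one_minus_inverse_succ_powr)

lemma logistic_powr_image_subset: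
  assumes "\<alpha> > 0" and "\<beta> > 0" and "\<alpha> \<le> (\<beta> + 1) * ((\<beta> + 1) / \<beta>) powr \<beta>"
  shows "logistic_powr \<alpha> \<beta> ` {0..1} \<subseteq> {0..1}"
proof
  fix y assume "y \<in> logistic_powr \<alpha> \<beta> ` {0..1}"
  then obtain x where x: "x \<in> {0..1}" and y: "y = logistic_powr \<alpha> \<beta> x"
    by auto
  have "y \<le> logistic_powr \<alpha> \<beta> (1 / (\<beta> + 1))"
    unfolding y using assms(1,2) x
    by (intro unimodal_le_peak[OF strict_mono_on_logistic_powr strict_antimono_on_logistic_powr])
  also have "\<dots> \<le> 1"
    using assms by (simp add: logistic_powr_peak pos_divide_le_eq mult.commute)
  finally show "y \<in> {0..1}"
    using assms x y by (simp add: logistic_powr_def)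
qed

lemma logistic_powr_gt_self:
  assumes "\<beta> > 0" and "((\<beta> + 1) / \<beta>) powr \<beta> < \<alpha>"
    and "0 < x" and "x \<le> 1 / (\<beta> + 1)"
  shows "logistic_powr \<alpha> \<beta> x > x"
proof -
  have "(1 - 1 / (\<beta> + 1)) powr \<beta> \<le> (1 - x) powr \<beta>"
    using assms by (intro powr_mono2) auto
  then have "1 / ((\<beta> + 1) / \<beta>) powr \<beta> \<le> (1 - x) powr \<beta>"
    using assms(1) by (simp only: one_minus_inverse_succ_powr)
  then have "1 \<le> (1 - x) powr \<beta> * ((\<beta> + 1) / \<beta>) powr \<beta>"
    using assms(1) by (simp add: divide_le_eq)
  also have "\<dots> < (1 - x) powr \<beta> * \<alpha>"
  proof (rule mult_strict_left_mono[OF assms(2)])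
    have "1 / (\<beta> + 1) < 1"
      using assms(1) by simp
    with assms(4) show "0 < (1 - x) powr \<beta>"
      by simp
  qed
  finally have "1 < \<alpha> * (1 - x) powr \<beta>"
    by (simp add: mult.commute)
  then have "x * 1 < x * (\<alpha> * (1 - x) powr \<beta>)"
    using assms(3) by (intro mult_strict_left_mono)
  then show ?thesis
    by (simp add: logistic_powr_def mult.left_commute)
qed

theorem lemma2p1:
  fixes \<alpha> \<beta> :: real
  assumes "\<beta> > 0" and "\<alpha> > 0"
    and "((\<beta> + 1) / \<beta>) powr \<beta> < \<alpha>"
    and "\<alpha> \<le> (\<beta> + 1) * ((\<beta> + 1) / \<beta>) powr \<beta>"
  defines "f \<equiv> (\<lambda>k::real. \<alpha> * k * (1 - k) powr \<beta>)"
  shows "f ` {0..1} \<subseteq> {0..1} \<and> in_class_G f 0 1"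
proof -
  define m where "m = 1 / (\<beta> + 1)"
  have f: "f = logistic_powr \<alpha> \<beta>"
    by (simp add: f_def logistic_powr_def[abs_def])
  have "f ` {0..1} \<subseteq> {0..1}"
    unfolding f using assms(2,1,4) by (rule logistic_powr_image_subset)
  moreover have "\<forall>x\<in>{0<..m}. f x > x"
    unfolding f m_def using assms(1,3) by (auto intro: logistic_powr_gt_self)
  moreover have "0 < m" and "m < 1"
    using assms(1) by (simp_all add: m_def)
  moreover have "continuous_on {0..1} f"
    and "strict_mono_on {0..m} f" and "strict_antimono_on {m..1} f"
    using assms(1,2) unfolding f m_def
    by (simp_all add: continuous_on_logistic_powr strict_mono_on_logistic_powr
        strict_antimono_on_logistic_powr)
  moreover have "f 0 \<ge> 0" and "f 1 < 1"
    by (simp_all add: f_def)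
  ultimately show ?thesis
    unfolding in_class_G_def by auto
qed

end
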